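(* Let $p\ge 2$ be an integer and let $G$ be a finite simple $[p+2,p]$-graph of order $n$ with minimum degree $\delta(G)\ge p$ and $n\ge 2p+3$. Then $G$ is triangle-free if and only if $p$ is even, $p\ge 6$, and $G$ is isomorphic to $C_5^{(p/2)}$.
   Context: For integers $s,t$, a graph $G$ is called an $[s,t]$-graph if every induced subgraph of $G$ on $s$ vertices has at least $t$ edges. For a graph $H$ and a positive integer $k$, the $k$-blow-up $H^{(k)}$ is the graph obtained by replacing each vertex of $H$ by $k$ distinct vertices, where a copy of $u$ is adjacent to a copy of $v$ if and only if $uv$ is an edge of $H$ (in particular copies of the same vertex are pairwise nonadjacent). $C_5$ denotes the cycle on $5$ vertices. *)

theory Defs
  imports Main
begin

definition simple_graph :: "'a set \<Rightarrow> ('a \<Rightarrow> 'a \<Rightarrow> bool) \<Rightarrow> bool" where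
  "simple_graph V E \<longleftrightarrow> finite V \<and> (\<forall>u v. E u v \<longrightarrow> u \<in> V \<and> v \<in> V)
     \<and> (\<forall>u v. E u v \<longrightarrow> E v u) \<and> (\<forall>u. \<not> E u u)"

definition edges_in :: "('a \<Rightarrow> 'a \<Rightarrow> bool) \<Rightarrow> 'a set \<Rightarrow> 'a set set" where
  "edges_in E S = {{u, v} | u v. u \<in> S \<and> v \<in> S \<and> E u v}"

definition st_graph :: "'a set \<Rightarrow> ('a \<Rightarrow> 'a \<Rightarrow> bool) \<Rightarrow> nat \<Rightarrow> nat \<Rightarrow> bool" where
  "st_graph V E s t \<longleftrightarrow> (\<forall>S. S \<subseteq> V \<and> card S = s \<longrightarrow> card (edges_in E S) \<ge> t)"

definition degree :: "'a set \<Rightarrow> ('a \<Rightarrow> 'a \<Rightarrow> bool) \<Rightarrow> 'a \<Rightarrow> nat" where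
  "degree V E v = card {u \<in> V. E v u}"

definition min_degree_ge :: "'a set \<Rightarrow> ('a \<Rightarrow> 'a \<Rightarrow> bool) \<Rightarrow> nat \<Rightarrow> bool" where
  "min_degree_ge V E d \<longleftrightarrow> (\<forall>v \<in> V. degree V E v \<ge> d)"

definition triangle_free :: "'a set \<Rightarrow> ('a \<Rightarrow> 'a \<Rightarrow> bool) \<Rightarrow> bool" where
  "triangle_free V E \<longleftrightarrow> \<not> (\<exists>u \<in> V. \<exists>v \<in> V. \<exists>w \<in> V. E u v \<and> E v w \<and> E u w)"

definition graph_iso :: "'a set \<Rightarrow> ('a \<Rightarrow> 'a \<Rightarrow> bool) \<Rightarrow> 'b set \<Rightarrow> ('b \<Rightarrow> 'b \<Rightarrow> bool) \<Rightarrow> bool" where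
  "graph_iso V E V' E' \<longleftrightarrow>
     (\<exists>f. bij_betw f V V' \<and> (\<forall>u \<in> V. \<forall>v \<in> V. E u v \<longleftrightarrow> E' (f u) (f v)))"

definition blowup_V :: "'a set \<Rightarrow> nat \<Rightarrow> ('a \<times> nat) set" where
  "blowup_V V k = V \<times> {0..<k}"

definition blowup_E :: "('a \<Rightarrow> 'a \<Rightarrow> bool) \<Rightarrow> nat \<Rightarrow> 'a \<times> nat \<Rightarrow> 'a \<times> nat \<Rightarrow> bool" where
  "blowup_E E k x y \<longleftrightarrow> snd x < k \<and> snd y < k \<and> E (fst x) (fst y)"

definition C5_V :: "nat set" where "C5_V = {0..<5}"

definition C5_E :: "nat \<Rightarrow> nat \<Rightarrow> bool" where
  "C5_E i j \<longleftrightarrow> i < 5 \<and> j < 5 \<and> (j = (i + 1) mod 5 \<or> i = (j + 1) mod 5)"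

end

theory Submission
  imports Defs
begin

text \<open>
  Every neighbourhood of a triangle-free graph is independent, and the \<open>[p+2,p]\<close> condition
  together with \<open>n \<ge> 2p+3\<close> bounds independent sets by \<open>p\<close>, so \<open>G\<close> is \<open>p\<close>-regular. Counting the
  edges that leave the vertices outside \<open>N u \<union> N v\<close>, for an edge \<open>uv\<close>, shows that two non-adjacent
  vertices with different neighbourhoods have exactly \<open>p/2\<close> common neighbours; double counting
  paths of length two then gives \<open>n = 3p - t\<close>, where every twin class has size \<open>t = p/2\<close>.
  For such a pair \<open>u, x\<close> the sets \<open>T u\<close>, \<open>N u \<inter> N x\<close>, \<open>T x\<close>, \<open>N x - N u\<close>, \<open>N u - N x\<close>
  (\<open>T w\<close> the twin class of \<open>w\<close>) have \<open>p/2\<close> vertices each and induce the blow-up of \<open>C\<^sub>5\<close>,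
  and \<open>n \<ge> 2p+3\<close> forces \<open>p/2 \<ge> 3\<close>. Conversely, blow-ups of \<open>C\<^sub>5\<close> are triangle-free.
\<close>

lemma sum_card_filter_swap:
  assumes "finite X" "finite Y"
  shows "(\<Sum>y\<in>Y. card {x \<in> X. P y x}) = (\<Sum>x\<in>X. card {y \<in> Y. P y x})"
proof -
  have "(\<Sum>y\<in>Y. card {x \<in> X. P y x}) = (\<Sum>y\<in>Y. \<Sum>x\<in>X. if P y x then 1 else 0)"
    using assms(1) sum.inter_filter[of X "\<lambda>_. 1 :: nat"] by simp
  also have "\<dots> = (\<Sum>x\<in>X. \<Sum>y\<in>Y. if P y x then 1 else 0)"
    by (rule sum.swap)
  also have "\<dots> = (\<Sum>x\<in>X. card {y \<in> Y. P y x})"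
    using assms(2) sum.inter_filter[of Y "\<lambda>_. 1 :: nat"] by simp
  finally show ?thesis .
qed

lemma obtain_other_of_card_ge_3:
  assumes "3 \<le> card R"
  obtains c where "c \<in> R" "c \<noteq> a" "c \<noteq> b"
proof -
  have "card {a, b} \<le> 2" by (simp add: card_insert_if)
  then have "\<not> R \<subseteq> {a, b}"
    using assms card_mono[of "{a, b}" R] by fastforce
  then show thesis using that by blast
qed

definition nbhd :: "'a set \<Rightarrow> ('a \<Rightarrow> 'a \<Rightarrow> bool) \<Rightarrow> 'a \<Rightarrow> 'a set" where
  "nbhd V E x = {y \<in> V. E x y}"

definition twins :: "'a set \<Rightarrow> ('a \<Rightarrow> 'a \<Rightarrow> bool) \<Rightarrow> 'a \<Rightarrow> 'a set" where
  "twins V E w = {y \<in> V. nbhd V E y = nbhd V E w}"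

definition independent :: "('a \<Rightarrow> 'a \<Rightarrow> bool) \<Rightarrow> 'a set \<Rightarrow> bool" where
  "independent E S \<longleftrightarrow> (\<forall>x\<in>S. \<forall>y\<in>S. \<not> E x y)"

lemma independent_subset: "independent E S \<Longrightarrow> S' \<subseteq> S \<Longrightarrow> independent E S'"
  unfolding independent_def by blast

lemma edges_in_eq_empty_iff: "edges_in E S = {} \<longleftrightarrow> independent E S"
  unfolding edges_in_def independent_def by blast

lemma finite_edges_in: "finite S \<Longrightarrow> finite (edges_in E S)"
proof -
  assume "finite S"
  moreover have "edges_in E S \<subseteq> (\<lambda>(u, v). {u, v}) ` (S \<times> S)"
    unfolding edges_in_def by auto
  ultimately show ?thesis by (meson finite_SigmaI finite_imageI finite_subset)
qed

lemma card_edges_in_insert_le: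
  assumes "simple_graph V E" "finite S"
  shows "card (edges_in E (insert a S)) \<le> card (edges_in E S) + card (nbhd V E a \<inter> S)"
proof -
  have "edges_in E (insert a S) \<subseteq> edges_in E S \<union> (\<lambda>y. {a, y}) ` (nbhd V E a \<inter> S)"
    using assms(1) unfolding edges_in_def nbhd_def simple_graph_def by (auto simp: insert_commute)
  then have "card (edges_in E (insert a S)) \<le> card (edges_in E S \<union> (\<lambda>y. {a, y}) ` (nbhd V E a \<inter> S))"
    using assms(2) by (intro card_mono) (auto simp: finite_edges_in)
  also have "\<dots> \<le> card (edges_in E S) + card (nbhd V E a \<inter> S)"
    by (meson add_left_mono card_Un_le card_image_le assms(2) finite_Int order_trans)
  finally show ?thesis .
qed

lemma st_graph_independent_card_le:
  assumes "st_graph V E (p + 2) p" "0 < p" "S \<subseteq> V" "independent E S"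
  shows "card S \<le> p + 1"
proof (rule ccontr)
  assume "\<not> card S \<le> p + 1"
  then obtain S' where S': "S' \<subseteq> S" "card S' = p + 2"
    by (metis Suc_eq_plus1 add_Suc_right not_less_eq_eq obtain_subset_with_card_n one_add_one)
  then have "p \<le> card (edges_in E S')"
    using assms(1,3) unfolding st_graph_def by blast
  moreover have "edges_in E S' = {}"
    using S'(1) assms(4) edges_in_eq_empty_iff independent_subset by metis
  ultimately show False using assms(2) by simp
qed

lemma st_graph_card_nbhd_Int_independent:
  assumes "simple_graph V E" "st_graph V E (p + 2) p"
    and "I \<subseteq> V" "independent E I" "card I = p + 1" "a \<in> V - I"
  shows "p \<le> card (nbhd V E a \<inter> I)"
proof -
  have fin: "finite I" using assms(1,3) finite_subset unfolding simple_graph_def by blast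
  then have "p \<le> card (edges_in E (insert a I))"
    using assms(2-6) unfolding st_graph_def by auto
  also have "\<dots> \<le> card (edges_in E I) + card (nbhd V E a \<inter> I)"
    using card_edges_in_insert_le[OF assms(1) fin] .
  finally show ?thesis using assms(4) by (simp add: edges_in_eq_empty_iff[symmetric])
qed

lemma st_graph_card_nbhd_Int_independent_pair:
  assumes "simple_graph V E" "st_graph V E (p + 2) p"
    and "I \<subseteq> V" "independent E I" "card I = p" "a \<in> V - I" "b \<in> V - I" "a \<noteq> b"
  shows "p \<le> card (nbhd V E a \<inter> I) + card (nbhd V E b \<inter> I) + (if E a b then 1 else 0)"
proof -
  have fin: "finite I" using assms(1,3) finite_subset unfolding simple_graph_def by blast
  have "p \<le> card (edges_in E (insert a (insert b I)))"
    using assms(2-8) fin unfolding st_graph_def by auto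
  also have "\<dots> \<le> card (edges_in E (insert b I)) + card (nbhd V E a \<inter> insert b I)"
    using card_edges_in_insert_le[OF assms(1)] fin by blast
  also have "\<dots> \<le> card (edges_in E I) + card (nbhd V E b \<inter> I) + card (nbhd V E a \<inter> insert b I)"
    using card_edges_in_insert_le[OF assms(1) fin] by simp
  also have "card (nbhd V E a \<inter> insert b I) = card (nbhd V E a \<inter> I) + (if E a b then 1 else 0)"
    using assms(6,7) fin by (auto simp: nbhd_def Int_insert_right)
  finally show ?thesis using assms(4) by (simp add: edges_in_eq_empty_iff[symmetric])
qed

lemma fibrewise_bij:
  assumes "finite V" "f ` V \<subseteq> W" "\<And>i. i \<in> W \<Longrightarrow> card {z \<in> V. f z = i} = k"
  obtains g where "bij_betw g V (W \<times> {0..<k})" "\<And>z. z \<in> V \<Longrightarrow> fst (g z) = f z"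
proof -
  have "\<exists>h. bij_betw h {z \<in> V. f z = i} {0..<k}" if "i \<in> W" for i
    using that assms(1,3) by (intro finite_same_card_bij) auto
  then obtain h where h: "\<And>i. i \<in> W \<Longrightarrow> bij_betw (h i) {z \<in> V. f z = i} {0..<k}"
    by metis
  define g where "g z = (f z, h (f z) z)" for z
  have "inj_on g V"
  proof (rule inj_onI)
    fix z z' assume z: "z \<in> V" "z' \<in> V" "g z = g z'"
    then have "f z = f z'" "h (f z) z = h (f z) z'" unfolding g_def by auto
    moreover have "inj_on (h (f z)) {y \<in> V. f y = f z}"
      using h z(1) assms(2) bij_betw_imp_inj_on by blast
    ultimately show "z = z'" using z by (auto dest: inj_onD)
  qed
  moreover have "g ` V = W \<times> {0..<k}"
  proof
    show "g ` V \<subseteq> W \<times> {0..<k}"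
      using assms(2) bij_betw_apply[OF h] unfolding g_def by fastforce
    show "W \<times> {0..<k} \<subseteq> g ` V"
    proof
      fix y assume "y \<in> W \<times> {0..<k}"
      then obtain i j where ij: "y = (i, j)" "i \<in> W" "j \<in> {0..<k}" by blast
      have "j \<in> h i ` {z \<in> V. f z = i}"
        using bij_betw_imp_surj_on[OF h[OF ij(2)]] ij(3) by simp
      then obtain z where "z \<in> V" "f z = i" "h i z = j" by blast
      then show "y \<in> g ` V" using ij unfolding g_def by (auto intro!: image_eqI[where x = z])
    qed
  qed
  ultimately show thesis using that[of g] unfolding bij_betw_def g_def by simp
qed

lemma graph_iso_blowupI:
  assumes "finite V" "f ` V \<subseteq> W" "\<And>i. i \<in> W \<Longrightarrow> card {z \<in> V. f z = i} = k"
    and "\<And>z z'. z \<in> V \<Longrightarrow> z' \<in> V \<Longrightarrow> E z z' \<longleftrightarrow> F (f z) (f z')"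
  shows "graph_iso V E (blowup_V W k) (blowup_E F k)"
proof -
  obtain g where g: "bij_betw g V (W \<times> {0..<k})" "\<And>z. z \<in> V \<Longrightarrow> fst (g z) = f z"
    using fibrewise_bij assms(1-3) by blast
  have "snd (g z) < k" if "z \<in> V" for z
    using bij_betw_apply[OF g(1) that] by auto
  then show ?thesis
    unfolding graph_iso_def blowup_V_def blowup_E_def using g assms(4) by auto
qed

lemma triangle_free_iso:
  assumes "graph_iso V E V' E'" "triangle_free V' E'"
  shows "triangle_free V E"
  using assms unfolding graph_iso_def triangle_free_def by (meson bij_betw_apply)

lemma triangle_free_blowup:
  assumes "triangle_free W F"
  shows "triangle_free (blowup_V W k) (blowup_E F k)"
  unfolding triangle_free_def
proof (intro notI, elim bexE conjE)
  fix x y z assume "x \<in> blowup_V W k" "y \<in> blowup_V W k" "z \<in> blowup_V W k"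
    "blowup_E F k x y" "blowup_E F k y z" "blowup_E F k x z"
  then have "fst x \<in> W" "fst y \<in> W" "fst z \<in> W"
    and "F (fst x) (fst y)" "F (fst y) (fst z)" "F (fst x) (fst z)"
    unfolding blowup_V_def blowup_E_def by auto
  then show False using assms unfolding triangle_free_def by blast
qed

lemma C5_E_iff: "C5_E i j \<longleftrightarrow> i < 5 \<and> j < 5 \<and> (j = (i + 1) mod 5 \<or> j = (i + 4) mod 5)"
proof -
  have "i = (j + 1) mod 5 \<longleftrightarrow> j = (i + 4) mod 5" if "i < 5" "j < 5"
  proof -
    have "i = 0 \<or> i = 1 \<or> i = 2 \<or> i = 3 \<or> i = 4" "j = 0 \<or> j = 1 \<or> j = 2 \<or> j = 3 \<or> j = 4"
      using that by auto
    then show ?thesis by (elim disjE) simp_all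
  qed
  then show ?thesis unfolding C5_E_def by blast
qed

lemma triangle_free_C5: "triangle_free C5_V C5_E"
  unfolding triangle_free_def
proof (intro notI, elim bexE conjE)
  fix a b c assume abc: "C5_E a b" "C5_E b c" "C5_E a c"
  then have "a < 5" "b < 5" "c < 5" unfolding C5_E_def by simp_all
  then have "a = 0 \<or> a = 1 \<or> a = 2 \<or> a = 3 \<or> a = 4" "b = 0 \<or> b = 1 \<or> b = 2 \<or> b = 3 \<or> b = 4"
    "c = 0 \<or> c = 1 \<or> c = 2 \<or> c = 3 \<or> c = 4"
    by auto
  then show False using abc by (elim disjE) (simp_all add: C5_E_def)
qed

locale triangle_free_st_graph =
  fixes V :: "'a set" and E :: "'a \<Rightarrow> 'a \<Rightarrow> bool" and p :: nat
  assumes p_ge_2: "2 \<le> p"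
    and simple: "simple_graph V E"
    and st: "st_graph V E (p + 2) p"
    and min_degree: "min_degree_ge V E p"
    and card_V: "2 * p + 3 \<le> card V"
    and triangle_free: "triangle_free V E"
begin

abbreviation N where "N \<equiv> nbhd V E"
abbreviation T where "T \<equiv> twins V E"

lemma finite_V: "finite V"
  using simple by (simp add: simple_graph_def)

lemma adj_in_V: "E x y \<Longrightarrow> x \<in> V \<and> y \<in> V"
  using simple by (simp add: simple_graph_def)

lemma adj_sym: "E x y \<Longrightarrow> E y x"
  using simple by (simp add: simple_graph_def)

lemma not_adj_self: "\<not> E x x"
  using simple by (simp add: simple_graph_def)

lemma no_triangle: "E x y \<Longrightarrow> E y z \<Longrightarrow> E x z \<Longrightarrow> False"
  using triangle_free adj_in_V unfolding triangle_free_def by blast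

lemma nbhd_subset: "N x \<subseteq> V"
  by (auto simp: nbhd_def)

lemma finite_nbhd: "finite (N x)"
  using finite_V nbhd_subset finite_subset by blast

lemma mem_nbhd_iff: "y \<in> N x \<longleftrightarrow> E x y"
  using adj_in_V by (auto simp: nbhd_def)

lemma mem_twins_iff: "z \<in> T w \<longleftrightarrow> z \<in> V \<and> N z = N w"
  by (auto simp: twins_def)

lemma finite_twins: "finite (T w)"
  using finite_V by (simp add: twins_def)

lemma independent_nbhd: "independent E (N x)"
  unfolding independent_def using mem_nbhd_iff no_triangle adj_sym by blast

lemma nbhd_Int_nbhd_adj: "E x y \<Longrightarrow> N x \<inter> N y = {}"
  using mem_nbhd_iff no_triangle by blast

text \<open>Fix an independent set \<open>I\<close> of size \<open>p + 1\<close>: every other vertex has at least \<open>p\<close> neighbours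
  in \<open>I\<close>, so two adjacent vertices outside \<open>I\<close> would need \<open>2 p \<le> p + 1\<close> vertices of \<open>I\<close>.
  Hence \<open>V - I\<close> is an independent set of size at least \<open>p + 2\<close>.\<close>

lemma independent_card_le:
  assumes "S \<subseteq> V" "independent E S"
  shows "card S \<le> p"
proof (rule ccontr)
  assume "\<not> card S \<le> p"
  then obtain I where I: "I \<subseteq> S" "card I = p + 1"
    by (metis Suc_eq_plus1 not_less_eq_eq obtain_subset_with_card_n)
  have I_indep: "independent E I" "I \<subseteq> V" using I(1) assms independent_subset by auto
  have fin: "finite I" using I_indep(2) finite_V finite_subset by blast
  have "independent E (V - I)"
    unfolding independent_def
  proof (intro ballI notI)
    fix a b assume ab: "a \<in> V - I" "b \<in> V - I" "E a b"
    have "p \<le> card (N a \<inter> I)" "p \<le> card (N b \<inter> I)"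
      using st_graph_card_nbhd_Int_independent[OF simple st I_indep(2,1) I(2)] ab by auto
    moreover have "card (N a \<inter> I) + card (N b \<inter> I) \<le> card I"
      using nbhd_Int_nbhd_adj[OF ab(3)] fin card_Un_disjoint[of "N a \<inter> I" "N b \<inter> I"]
        card_mono[of I "(N a \<inter> I) \<union> (N b \<inter> I)"] by (simp add: Int_Un_distrib2 disjoint_iff)
    ultimately show False using I(2) p_ge_2 by linarith
  qed
  moreover have "card (V - I) \<ge> p + 2"
    using card_V I(2) I_indep(2) finite_V by (simp add: card_Diff_subset fin)
  ultimately show False
    using st_graph_independent_card_le[OF st, of "V - I"] p_ge_2 by simp
qed

lemma card_nbhd: "x \<in> V \<Longrightarrow> card (N x) = p"
  using min_degree independent_card_le[OF nbhd_subset independent_nbhd]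
  unfolding min_degree_ge_def degree_def nbhd_def by (meson le_antisym)

lemma nbhd_eq_of_subset: "z \<in> V \<Longrightarrow> S \<subseteq> N z \<Longrightarrow> card S = p \<Longrightarrow> N z = S"
  using card_subset_eq finite_nbhd card_nbhd by metis

lemma card_outside_edge:
  assumes "E u v"
  shows "3 \<le> card (V - N u - N v)"
proof -
  have "card (N u \<union> N v) = 2 * p"
    using assms adj_in_V card_nbhd nbhd_Int_nbhd_adj finite_nbhd by (simp add: card_Un_disjoint)
  moreover have "card (V - (N u \<union> N v)) = card V - card (N u \<union> N v)"
    using nbhd_subset finite_nbhd by (intro card_Diff_subset) auto
  ultimately show ?thesis using card_V by (simp add: set_diff_eq)
qed

lemma card_nbhd_outside_edge:
  assumes "E u v" "x \<in> V - N u - N v"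
  shows "card (N x \<inter> N u) + card (N x \<inter> N v) + card (N x \<inter> (V - N u - N v)) = p"
proof -
  have "N x = (N x \<inter> N u) \<union> (N x \<inter> N v) \<union> (N x \<inter> (V - N u - N v))"
    using nbhd_subset by blast
  moreover have "card (N x \<inter> N u \<union> N x \<inter> N v) = card (N x \<inter> N u) + card (N x \<inter> N v)"
    using nbhd_Int_nbhd_adj[OF assms(1)] finite_nbhd by (intro card_Un_disjoint) auto
  moreover have "card (N x \<inter> N u \<union> N x \<inter> N v \<union> N x \<inter> (V - N u - N v))
      = card (N x \<inter> N u \<union> N x \<inter> N v) + card (N x \<inter> (V - N u - N v))"
    using finite_nbhd by (intro card_Un_disjoint) auto
  ultimately show ?thesis using card_nbhd assms(2) by simp
qed

text \<open>Both \<open>N u\<close> and \<open>N v\<close> are independent sets of size \<open>p\<close>, so a non-adjacent pair outside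
  them sends at least \<open>p\<close> edges into each; that uses up all \<open>2 p\<close> edges the pair has.\<close>

lemma outside_edge_nonadjacent_pair:
  assumes "E u v" "x \<in> V - N u - N v" "y \<in> V - N u - N v" "x \<noteq> y" "\<not> E x y"
  shows "N x \<inter> (V - N u - N v) = {}" "card (N x \<inter> N u) + card (N y \<inter> N u) = p"
proof -
  have pair: "p \<le> card (N x \<inter> N w) + card (N y \<inter> N w)" if "w \<in> {u, v}" for w
  proof -
    have "w \<in> V" using that assms(1) adj_in_V by blast
    then show ?thesis
      using st_graph_card_nbhd_Int_independent_pair[OF simple st nbhd_subset independent_nbhd
          card_nbhd, of w x y] that assms(2-5) by auto
  qed
  have "p \<le> card (N x \<inter> N u) + card (N y \<inter> N u)" "p \<le> card (N x \<inter> N v) + card (N y \<inter> N v)"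
    by (simp_all add: pair)
  note bounds = this card_nbhd_outside_edge[OF assms(1,2)] card_nbhd_outside_edge[OF assms(1,3)]
  have "card (N x \<inter> (V - N u - N v)) = 0"
    using bounds by linarith
  then show "N x \<inter> (V - N u - N v) = {}" using finite_nbhd by simp
  show "card (N x \<inter> N u) + card (N y \<inter> N u) = p"
    using bounds by linarith
qed

lemma independent_outside_edge:
  assumes "E u v"
  shows "independent E (V - N u - N v)"
  unfolding independent_def
proof (intro ballI notI)
  fix a b assume a: "a \<in> V - N u - N v" and b: "b \<in> V - N u - N v" and ab: "E a b"
  obtain c where c: "c \<in> V - N u - N v" "c \<noteq> a" "c \<noteq> b"
    using obtain_other_of_card_ge_3[OF card_outside_edge[OF assms]] by blast
  have "E w c" if "w \<in> V - N u - N v" "w' \<in> V - N u - N v" "E w w'" "w \<noteq> c" for w w'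
  proof (rule ccontr)
    assume "\<not> E w c"
    then have "N w \<inter> (V - N u - N v) = {}"
      using outside_edge_nonadjacent_pair(1)[OF assms that(1) c(1)] that(4) by blast
    then show False using that(2,3) mem_nbhd_iff by blast
  qed
  then have "E a c" "E b c" using a b ab adj_sym c by blast+
  then show False using ab no_triangle by blast
qed

lemma card_common_nbhd_outside_edge:
  assumes "E u v" "r \<in> V - N u - N v"
  shows "2 * card (N r \<inter> N u) = p"
proof -
  have R3: "3 \<le> card (V - N u - N v)" by (rule card_outside_edge[OF assms(1)])
  obtain y where y: "y \<in> V - N u - N v" "y \<noteq> r"
    using obtain_other_of_card_ge_3[OF R3] by metis
  obtain z where z: "z \<in> V - N u - N v" "z \<noteq> r" "z \<noteq> y"
    using obtain_other_of_card_ge_3[OF R3] by metis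
  have "\<not> E r y" "\<not> E r z" "\<not> E y z"
    using independent_outside_edge[OF assms(1)] assms(2) y(1) z(1)
    unfolding independent_def by blast+
  then have "card (N r \<inter> N u) + card (N y \<inter> N u) = p" "card (N r \<inter> N u) + card (N z \<inter> N u) = p"
      "card (N y \<inter> N u) + card (N z \<inter> N u) = p"
    using outside_edge_nonadjacent_pair(2)[OF assms(1)] assms(2) y z by metis+
  then show ?thesis by linarith
qed

definition far :: "'a \<Rightarrow> 'a \<Rightarrow> bool" where
  "far u x \<longleftrightarrow> u \<in> V \<and> x \<in> V \<and> \<not> E u x \<and> N u \<noteq> N x"

lemma far_sym: "far u x \<Longrightarrow> far x u"
  unfolding far_def using adj_sym by metis

lemma card_common_nbhd:
  assumes "far x y"
  shows "2 * card (N x \<inter> N y) = p"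
proof -
  have "\<not> N x \<subseteq> N y"
    using assms card_subset_eq[OF finite_nbhd] card_nbhd unfolding far_def by metis
  then obtain z where z: "z \<in> N x" "z \<notin> N y" by blast
  then have "E x z" "y \<in> V - N x - N z"
    using assms mem_nbhd_iff adj_sym adj_in_V unfolding far_def by blast+
  then show ?thesis
    using card_common_nbhd_outside_edge by (simp add: Int_commute)
qed


lemma twins_Int_nbhd: "T w \<inter> N w = {}"
  using mem_twins_iff mem_nbhd_iff adj_sym not_adj_self by blast

lemma adj_twin:
  assumes "y \<in> T w" "z \<in> N w"
  shows "E z y"
proof -
  have "z \<in> N y" using assms mem_twins_iff by blast
  then show ?thesis using mem_nbhd_iff adj_sym by blast
qed

lemma far_iff: "w \<in> V \<Longrightarrow> far w y \<longleftrightarrow> y \<in> V - T w - N w"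
  unfolding far_def using mem_twins_iff mem_nbhd_iff by auto

lemma card_V_decomp:
  assumes "w \<in> V"
  shows "card V = card (T w) + p + card (V - T w - N w)"
proof -
  have "V = (T w \<union> N w) \<union> (V - T w - N w)"
    using nbhd_subset mem_twins_iff by blast
  moreover have "card ((T w \<union> N w) \<union> (V - T w - N w)) = card (T w \<union> N w) + card (V - T w - N w)"
    using finite_V finite_twins finite_nbhd by (intro card_Un_disjoint) auto
  moreover have "card (T w \<union> N w) = card (T w) + p"
    using twins_Int_nbhd finite_twins finite_nbhd card_nbhd[OF assms]
    by (simp add: card_Un_disjoint)
  ultimately show ?thesis by metis
qed

lemma sum_card_nbhd_Int_nbhd:
  assumes "w \<in> V"
  shows "(\<Sum>y\<in>V. card (N y \<inter> N w)) = p * p"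
proof -
  have "(\<Sum>y\<in>V. card (N y \<inter> N w)) = (\<Sum>y\<in>V. card {x \<in> N w. E y x})"
    by (intro sum.cong refl arg_cong[where f = card]) (auto simp: mem_nbhd_iff)
  also have "\<dots> = (\<Sum>x\<in>N w. card {y \<in> V. E y x})"
    by (rule sum_card_filter_swap[OF finite_nbhd finite_V])
  also have "\<dots> = (\<Sum>x\<in>N w. p)"
  proof (intro sum.cong refl)
    fix x assume "x \<in> N w"
    then have "x \<in> V" "{y \<in> V. E y x} = N x"
      using nbhd_subset adj_sym by (auto simp: nbhd_def)
    then show "card {y \<in> V. E y x} = p" using card_nbhd by simp
  qed
  finally show ?thesis using card_nbhd[OF assms] by simp
qed

text \<open>Double count the paths \<open>y - x - w\<close>: a vertex \<open>y\<close> has \<open>p\<close>, \<open>0\<close> or \<open>p / 2\<close> common neighbours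
  with \<open>w\<close> according as it is a twin of \<open>w\<close>, a neighbour of \<open>w\<close>, or neither.\<close>

lemma card_V_add_card_twins:
  assumes "w \<in> V"
  shows "card V + card (T w) = 3 * p"
proof -
  define X where "X = V - T w - N w"
  have V: "V = (T w \<union> N w) \<union> X" using nbhd_subset mem_twins_iff unfolding X_def by blast
  have disj: "(T w \<union> N w) \<inter> X = {}" "T w \<inter> N w = {}"
    using twins_Int_nbhd unfolding X_def by blast+
  have fin: "finite (T w)" "finite (N w)" "finite X"
    using finite_twins finite_nbhd finite_V unfolding X_def by auto
  have sum_T: "(\<Sum>y\<in>T w. card (N y \<inter> N w)) = card (T w) * p"
    using card_nbhd[OF assms] by (simp add: mem_twins_iff)
  have sum_N: "(\<Sum>y\<in>N w. card (N y \<inter> N w)) = 0"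
  proof (intro sum.neutral ballI)
    fix y assume "y \<in> N w"
    then have "N w \<inter> N y = {}" using nbhd_Int_nbhd_adj mem_nbhd_iff by blast
    then show "card (N y \<inter> N w) = 0" by (simp add: Int_commute)
  qed
  have sum_X: "(\<Sum>y\<in>X. 2 * card (N y \<inter> N w)) = card X * p"
  proof -
    have "2 * card (N y \<inter> N w) = p" if "y \<in> X" for y
      using that card_common_nbhd far_iff[OF assms] unfolding X_def by (metis Int_commute)
    then show ?thesis by simp
  qed
  have "p * p = (\<Sum>y\<in>T w. card (N y \<inter> N w)) + (\<Sum>y\<in>N w. card (N y \<inter> N w))
      + (\<Sum>y\<in>X. card (N y \<inter> N w))"
    using sum_card_nbhd_Int_nbhd[OF assms] fin disj
    by (subst (asm) V) (simp add: sum.union_disjoint)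
  then have "2 * (p * p) = 2 * (card (T w) * p) + card X * p"
    using sum_T sum_N sum_X by (simp add: sum_distrib_left)
  then have "p * (3 * p) = p * (card V + card (T w))"
    using card_V_decomp[OF assms] unfolding X_def by (simp add: algebra_simps)
  then show ?thesis using p_ge_2 by simp
qed

lemma obtain_far:
  assumes "w \<in> V"
  obtains x where "far w x"
proof -
  have "card (V - T w - N w) \<noteq> 0"
    using card_V_decomp[OF assms] card_V_add_card_twins[OF assms] card_V by linarith
  then obtain x where "x \<in> V - T w - N w" by (metis card.empty ex_in_conv)
  then show thesis using that far_iff[OF assms] by blast
qed

lemma card_nbhd_diff:
  assumes "far u x"
  shows "2 * card (N u - N x) = p"
proof -
  have "card (N u - N x) = card (N u) - card (N u \<inter> N x)"
    by (simp add: card_Diff_subset_Int finite_nbhd)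
  then show ?thesis
    using assms card_common_nbhd[OF assms] card_nbhd unfolding far_def by simp
qed

lemma nbhd_Int_of_private_nbr:
  assumes "far u x" "y \<in> N x - N u"
  shows "N y \<inter> N u = N u - N x"
proof -
  have "E x y" "y \<in> V" "\<not> E u y" using assms mem_nbhd_iff nbhd_subset by auto
  moreover have "x \<in> N y" "x \<notin> N u" using assms(1) \<open>E x y\<close> adj_sym mem_nbhd_iff
    unfolding far_def by auto
  ultimately have "far u y" using assms(1) unfolding far_def by auto
  then have "2 * card (N y \<inter> N u) = 2 * card (N u - N x)"
    using card_common_nbhd card_nbhd_diff[OF assms(1)] by (simp add: Int_commute)
  moreover have "N y \<inter> N u \<subseteq> N u - N x"
    using assms(2) nbhd_Int_nbhd_adj mem_nbhd_iff by blast
  ultimately show ?thesis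
    using card_subset_eq finite_nbhd by (metis finite_Diff mult_left_cancel zero_neq_numeral)
qed

lemma card_twins_eq: "u \<in> V \<Longrightarrow> v \<in> V \<Longrightarrow> card (T u) = card (T v)"
  using card_V_add_card_twins[of u] card_V_add_card_twins[of v] by simp

lemma card_twins_le:
  assumes "u \<in> V"
  shows "2 * card (T u) \<le> p"
proof -
  obtain x where x: "far u x" using obtain_far[OF assms] .
  then have "N u \<inter> N x \<noteq> {}"
    using card_common_nbhd[OF x] p_ge_2 by auto
  then obtain y where y: "y \<in> N u \<inter> N x" by blast
  have "T y \<subseteq> N u \<inter> N x"
    using y adj_twin adj_sym mem_nbhd_iff mem_twins_iff by blast
  then have "card (T y) \<le> card (N u \<inter> N x)"
    by (simp add: card_mono finite_nbhd)
  moreover have "card (T y) = card (T u)"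
    using y nbhd_subset card_twins_eq assms by blast
  ultimately show ?thesis using card_common_nbhd[OF x] by simp
qed

text \<open>The private neighbours \<open>Y = N x - N u\<close> of a vertex \<open>x\<close> far from \<open>u\<close> are pairwise twins:
  two of them share \<open>x\<close> and all of \<open>N u - N x\<close>, i.e. more than \<open>p / 2\<close> neighbours.\<close>

lemma card_twins_ge:
  assumes "u \<in> V"
  shows "p \<le> 2 * card (T u)"
proof -
  obtain x where x: "far u x" using obtain_far[OF assms] .
  define Y where "Y = N x - N u"
  have card_Y: "2 * card Y = p"
    using card_nbhd_diff[OF far_sym[OF x]] unfolding Y_def .
  then obtain y0 where y0: "y0 \<in> Y" using p_ge_2 by fastforce
  have "Y \<subseteq> T y0"
  proof
    fix y assume y: "y \<in> Y"
    have "N y = N y0"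
    proof (rule ccontr)
      assume "N y \<noteq> N y0"
      then have "far y0 y"
        using y y0 independent_nbhd nbhd_subset unfolding Y_def far_def independent_def by blast
      then have "2 * card (N y0 \<inter> N y) = p" by (rule card_common_nbhd)
      moreover have "insert x (N u - N x) \<subseteq> N y0 \<inter> N y"
      proof -
        have "x \<in> N y0" "x \<in> N y"
          using y y0 mem_nbhd_iff adj_sym unfolding Y_def by blast+
        moreover have "N u - N x \<subseteq> N y0" "N u - N x \<subseteq> N y"
          using nbhd_Int_of_private_nbr[OF x] y y0 unfolding Y_def by blast+
        ultimately show ?thesis by blast
      qed
      then have "card (insert x (N u - N x)) \<le> card (N y0 \<inter> N y)"
        by (simp add: card_mono finite_nbhd)
      moreover have "card (insert x (N u - N x)) = card (N u - N x) + 1"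
        using x mem_nbhd_iff finite_nbhd unfolding far_def by simp
      ultimately show False using card_nbhd_diff[OF x] by linarith
    qed
    then show "y \<in> T y0" using y nbhd_subset mem_twins_iff unfolding Y_def by blast
  qed
  then have "card Y \<le> card (T y0)" by (simp add: card_mono finite_twins)
  moreover have "card (T y0) = card (T u)"
    using y0 nbhd_subset card_twins_eq assms unfolding Y_def by blast
  ultimately show ?thesis using card_Y by simp
qed

lemma card_twins: "u \<in> V \<Longrightarrow> 2 * card (T u) = p"
  using card_twins_le card_twins_ge le_antisym by blast

lemma twins_Int_nbhd_far:
  assumes "far u x"
  shows "T u \<inter> N x = {}"
proof -
  have "x \<notin> N u" using assms mem_nbhd_iff unfolding far_def by blast
  moreover have "x \<in> N z" if "z \<in> N x" for z using that mem_nbhd_iff adj_sym by blast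
  ultimately show ?thesis using mem_twins_iff by blast
qed

lemma twins_Int_twins_far: "far u x \<Longrightarrow> T u \<inter> T x = {}"
  unfolding far_def by (auto simp: mem_twins_iff)

lemma nbhd_of_common_nbr:
  assumes "far u x" "z \<in> N u \<inter> N x"
  shows "N z = T u \<union> T x"
proof (rule nbhd_eq_of_subset)
  show "z \<in> V" using assms(2) nbhd_subset by blast
  show "T u \<union> T x \<subseteq> N z"
    using assms(2) adj_twin mem_nbhd_iff by blast
  have "card (T u \<union> T x) = card (T u) + card (T x)"
    using twins_Int_twins_far[OF assms(1)] finite_twins by (simp add: card_Un_disjoint)
  then show "card (T u \<union> T x) = p"
    using assms(1) card_twins[of u] card_twins[of x] unfolding far_def by linarith
qed

lemma nbhd_of_private_nbr:
  assumes "far u x" "z \<in> N x - N u"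
  shows "N z = T x \<union> (N u - N x)"
proof (rule nbhd_eq_of_subset)
  show "z \<in> V" using assms(2) nbhd_subset by blast
  show "T x \<union> (N u - N x) \<subseteq> N z"
    using assms(2) adj_twin mem_nbhd_iff nbhd_Int_of_private_nbr[OF assms] by blast
  have "T x \<inter> (N u - N x) = {}"
    using twins_Int_nbhd_far[OF far_sym[OF assms(1)]] by blast
  then have "card (T x \<union> (N u - N x)) = card (T x) + card (N u - N x)"
    using finite_twins finite_nbhd by (simp add: card_Un_disjoint)
  then show "card (T x \<union> (N u - N x)) = p"
    using assms(1) card_twins[of x] card_nbhd_diff[OF assms(1)] unfolding far_def by linarith
qed

text \<open>The sets \<open>T u\<close>, \<open>T x\<close>, \<open>N u \<union> N x\<close> have \<open>p / 2\<close>, \<open>p / 2\<close> and \<open>3 p / 2\<close> elements,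
  which adds up to \<open>card V = 3 p - card (T u)\<close>.\<close>

lemma V_eq_twins_Un_nbhds:
  assumes "far u x"
  shows "V = T u \<union> T x \<union> (N u \<union> N x)"
proof -
  have u: "u \<in> V" and x: "x \<in> V" using assms unfolding far_def by auto
  have "(T u \<union> T x) \<inter> (N u \<union> N x) = {}"
    using twins_Int_nbhd twins_Int_nbhd_far assms far_sym by blast
  then have "card (T u \<union> T x \<union> (N u \<union> N x)) = card (T u \<union> T x) + card (N u \<union> N x)"
    using finite_twins finite_nbhd by (intro card_Un_disjoint) auto
  moreover have "card (T u \<union> T x) = card (T u) + card (T x)"
    using twins_Int_twins_far[OF assms] finite_twins by (simp add: card_Un_disjoint)
  moreover have "card (N u \<union> N x) + card (N u \<inter> N x) = card (N u) + card (N x)"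
    using card_Un_Int finite_nbhd by metis
  ultimately have "2 * card (T u \<union> T x \<union> (N u \<union> N x)) = 2 * card V"
    using card_twins[OF u] card_twins[OF x] card_nbhd[OF u] card_nbhd[OF x]
      card_common_nbhd[OF assms] card_V_add_card_twins[OF u] by linarith
  moreover have "T u \<union> T x \<union> (N u \<union> N x) \<subseteq> V"
    using nbhd_subset mem_twins_iff by blast
  ultimately show ?thesis using card_subset_eq finite_V by (metis mult_left_cancel zero_neq_numeral)
qed

text \<open>The fibres \<open>T u\<close>, \<open>N u \<inter> N x\<close>, \<open>T x\<close>, \<open>N x - N u\<close>, \<open>N u - N x\<close> of this map
  are the five classes of the blown-up pentagon, in cyclic order.\<close>

definition pentagon_class :: "'a \<Rightarrow> 'a \<Rightarrow> 'a \<Rightarrow> nat" where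
  "pentagon_class u x z =
     (if z \<in> T u then 0 else if z \<in> N u \<inter> N x then 1 else if z \<in> T x then 2
      else if z \<in> N x then 3 else 4)"

lemma pentagon_class_lt: "pentagon_class u x z < 5"
  by (simp add: pentagon_class_def)

lemma pentagon_class_fibres:
  assumes "far u x"
  shows "{z \<in> V. pentagon_class u x z = 0} = T u"
    and "{z \<in> V. pentagon_class u x z = 1} = N u \<inter> N x"
    and "{z \<in> V. pentagon_class u x z = 2} = T x"
    and "{z \<in> V. pentagon_class u x z = 3} = N x - N u"
    and "{z \<in> V. pentagon_class u x z = 4} = N u - N x"
proof -
  have cover: "z \<in> T u \<or> z \<in> T x \<or> z \<in> N u \<or> z \<in> N x" if "z \<in> V" for z
    using V_eq_twins_Un_nbhds[OF assms] that by blast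
  note disjoint = twins_Int_nbhd[of u] twins_Int_nbhd[of x] twins_Int_nbhd_far[OF assms]
    twins_Int_nbhd_far[OF far_sym[OF assms]] twins_Int_twins_far[OF assms]
  have sub: "T u \<subseteq> V" "T x \<subseteq> V" "N u \<subseteq> V" "N x \<subseteq> V"
    using nbhd_subset mem_twins_iff by blast+
  show "{z \<in> V. pentagon_class u x z = 0} = T u"
    using sub unfolding pentagon_class_def by auto
  show "{z \<in> V. pentagon_class u x z = 1} = N u \<inter> N x"
    using sub disjoint unfolding pentagon_class_def by auto
  show "{z \<in> V. pentagon_class u x z = 2} = T x"
    using sub disjoint unfolding pentagon_class_def by auto
  show "{z \<in> V. pentagon_class u x z = 3} = N x - N u"
    using sub disjoint unfolding pentagon_class_def by auto
  show "{z \<in> V. pentagon_class u x z = 4} = N u - N x"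
    using sub disjoint unfolding pentagon_class_def by (auto dest: cover)
qed

lemma card_pentagon_class_fibre:
  assumes "far u x" "i < 5"
  shows "2 * card {z \<in> V. pentagon_class u x z = i} = p"
proof -
  have "i = 0 \<or> i = 1 \<or> i = 2 \<or> i = 3 \<or> i = 4" using assms(2) by auto
  then show ?thesis
    using pentagon_class_fibres[OF assms(1)] card_twins card_common_nbhd[OF assms(1)]
      card_nbhd_diff[OF assms(1)] card_nbhd_diff[OF far_sym[OF assms(1)]] assms(1)
    unfolding far_def by auto
qed

lemma nbhd_pentagon_fibre:
  assumes "far u x" "i < 5" "z \<in> V" "pentagon_class u x z = i"
  shows "N z = {z' \<in> V. pentagon_class u x z' = (i + 1) mod 5}
    \<union> {z' \<in> V. pentagon_class u x z' = (i + 4) mod 5}"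
proof -
  note fibres = pentagon_class_fibres[OF assms(1)]
  have z: "z \<in> {z' \<in> V. pentagon_class u x z' = i}" using assms(3,4) by simp
  have "i = 0 \<or> i = 1 \<or> i = 2 \<or> i = 3 \<or> i = 4" using assms(2) by auto
  then show ?thesis
  proof (elim disjE)
    assume "i = 0"
    then have "N z = (N u \<inter> N x) \<union> (N u - N x)" using z fibres(1) mem_twins_iff by blast
    then show ?thesis using \<open>i = 0\<close> fibres(2,5) by simp
  next
    assume "i = 1"
    then have "N z = T x \<union> T u" using z fibres(2) nbhd_of_common_nbr[OF assms(1)] by blast
    then show ?thesis using \<open>i = 1\<close> fibres(1,3) by (simp add: numeral_2_eq_2)
  next
    assume "i = 2"
    then have "N z = (N x - N u) \<union> (N u \<inter> N x)" using z fibres(3) mem_twins_iff by blast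
    then show ?thesis using \<open>i = 2\<close> fibres(2,4) by simp
  next
    assume "i = 3"
    then have "N z = (N u - N x) \<union> T x" using z fibres(4) nbhd_of_private_nbr[OF assms(1)] by blast
    then show ?thesis using \<open>i = 3\<close> fibres(3,5) by simp
  next
    assume "i = 4"
    then have "N z = T u \<union> (N x - N u)"
      using z fibres(5) nbhd_of_private_nbr[OF far_sym[OF assms(1)]] by blast
    then show ?thesis using \<open>i = 4\<close> fibres(1,4) by simp
  qed
qed

lemma adj_iff_C5_E_pentagon_class:
  assumes "far u x" "z \<in> V" "z' \<in> V"
  shows "E z z' \<longleftrightarrow> C5_E (pentagon_class u x z) (pentagon_class u x z')"
proof -
  have "E z z' \<longleftrightarrow> z' \<in> N z" using mem_nbhd_iff by simp
  also have "\<dots> \<longleftrightarrow> pentagon_class u x z' = (pentagon_class u x z + 1) mod 5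
      \<or> pentagon_class u x z' = (pentagon_class u x z + 4) mod 5"
    using nbhd_pentagon_fibre[OF assms(1) pentagon_class_lt assms(2) refl] assms(3) by auto
  also have "\<dots> \<longleftrightarrow> C5_E (pentagon_class u x z) (pentagon_class u x z')"
    using pentagon_class_lt C5_E_iff by auto
  finally show ?thesis .
qed

lemma graph_iso_blowup_C5:
  assumes "far u x"
  shows "graph_iso V E (blowup_V C5_V (p div 2)) (blowup_E C5_E (p div 2))"
proof (rule graph_iso_blowupI)
  show "finite V" by (rule finite_V)
  show "pentagon_class u x ` V \<subseteq> C5_V" using pentagon_class_lt by (auto simp: C5_V_def)
  show "card {z \<in> V. pentagon_class u x z = i} = p div 2" if "i \<in> C5_V" for i
    using card_pentagon_class_fibre[OF assms, of i] that by (auto simp: C5_V_def)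
  show "E z z' \<longleftrightarrow> C5_E (pentagon_class u x z) (pentagon_class u x z')" if "z \<in> V" "z' \<in> V" for z z'
    using adj_iff_C5_E_pentagon_class[OF assms that] .
qed

end

theorem lemma5:
  fixes V :: "'a set" and E :: "'a \<Rightarrow> 'a \<Rightarrow> bool" and p :: nat
  assumes "p \<ge> 2"
    and "simple_graph V E"
    and "st_graph V E (p + 2) p"
    and "min_degree_ge V E p"
    and "card V \<ge> 2 * p + 3"
  shows "triangle_free V E \<longleftrightarrow>
           (even p \<and> p \<ge> 6 \<and> graph_iso V E (blowup_V C5_V (p div 2)) (blowup_E C5_E (p div 2)))"
proof
  assume "triangle_free V E"
  with assms interpret triangle_free_st_graph V E p by unfold_locales
  have "V \<noteq> {}" using card_V by auto
  then obtain u where u: "u \<in> V" by blast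
  obtain x where "far u x" using obtain_far[OF u] .
  have "2 * card (T u) = p" "card V + card (T u) = 3 * p"
    using card_twins[OF u] card_V_add_card_twins[OF u] .
  then have "even p" "p \<ge> 6" using card_V by (metis dvd_triv_left, linarith)
  with graph_iso_blowup_C5[OF \<open>far u x\<close>]
  show "even p \<and> p \<ge> 6 \<and> graph_iso V E (blowup_V C5_V (p div 2)) (blowup_E C5_E (p div 2))"
    by blast
next
  assume "even p \<and> p \<ge> 6 \<and> graph_iso V E (blowup_V C5_V (p div 2)) (blowup_E C5_E (p div 2))"
  then show "triangle_free V E"
    using triangle_free_iso triangle_free_blowup[OF triangle_free_C5] by blast
qed

end
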